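(* Let $n\ge2$ be even, let $Q(x)=\sum_{i=1}^{n/2-1}Tr_1^n(x^{2^i+1})+Tr_1^{n/2}(x^{2^{n/2}+1})$ on $\mathbb{F}_{2^n}$, and let $f:\mathbb{F}_{2^n}\to\mathbb{F}_2$. Then $f$ is bent-negabent if and only if $f+Q$ is bent-negabent.
   Context: $Tr_1^m(z)=z+z^2+\dots+z^{2^{m-1}}$; $Tr=Tr_1^n$. Fix a self-dual basis $\{\alpha_i\}$ of $\mathbb{F}_{2^n}$ over $\mathbb{F}_2$ ($Tr(\alpha_i\alpha_j)=\delta_{ij}$), identify $\mathbb{F}_{2^n}$ with $\mathbb{F}_2^n$ via coordinates, and let $wt(x)$ be the number of nonzero coordinates. For $g:\mathbb{F}_{2^n}\to\mathbb{F}_2$: $g$ is bent if $\left|\sum_x(-1)^{g(x)+Tr(\mu x)}\right|=2^{n/2}$ for all $\mu$; negabent if $\left|\sum_x(-1)^{g(x)+Tr(\mu x)}\mathrm{i}^{wt(x)}\right|=2^{n/2}$ for all $\mu$ ($\mathrm{i}=\sqrt{-1}$); bent-negabent if both. *)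

theory Defs
  imports Complex_Main
begin

definition tr :: "nat \<Rightarrow> 'a::field \<Rightarrow> 'a" where
  "tr m z = (\<Sum>k<m. z ^ (2 ^ k))"

text \<open>(-1)^b for b in F_2 (viewed as the prime subfield {0,1} of the field).\<close>
definition sgn2 :: "'a::field \<Rightarrow> complex" where
  "sgn2 b = (if b = 0 then 1 else -1)"

definition self_dual_basis :: "nat \<Rightarrow> (nat \<Rightarrow> 'a::field) \<Rightarrow> bool" where
  "self_dual_basis n \<alpha> \<longleftrightarrow>
     (\<forall>i<n. \<forall>j<n. tr n (\<alpha> i * \<alpha> j) = (if i = j then 1 else 0))"

definition coords :: "nat \<Rightarrow> (nat \<Rightarrow> 'a::field) \<Rightarrow> 'a \<Rightarrow> nat \<Rightarrow> bool" where
  "coords n \<alpha> x = (THE c. (\<forall>i. i \<ge> n \<longrightarrow> \<not> c i) \<and>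
                       x = (\<Sum>i<n. if c i then \<alpha> i else 0))"

definition wt :: "nat \<Rightarrow> (nat \<Rightarrow> 'a::field) \<Rightarrow> 'a \<Rightarrow> nat" where
  "wt n \<alpha> x = card {i. i < n \<and> coords n \<alpha> x i}"

definition walsh :: "nat \<Rightarrow> ('a::{field,finite} \<Rightarrow> 'a) \<Rightarrow> 'a \<Rightarrow> complex" where
  "walsh n g \<mu> = (\<Sum>x\<in>UNIV. sgn2 (g x + tr n (\<mu> * x)))"

definition nega_walsh :: "nat \<Rightarrow> (nat \<Rightarrow> 'a::{field,finite}) \<Rightarrow> ('a \<Rightarrow> 'a) \<Rightarrow> 'a \<Rightarrow> complex" where
  "nega_walsh n \<alpha> g \<mu> = (\<Sum>x\<in>UNIV. sgn2 (g x + tr n (\<mu> * x)) * \<i> ^ wt n \<alpha> x)"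

definition bent :: "nat \<Rightarrow> ('a::{field,finite} \<Rightarrow> 'a) \<Rightarrow> bool" where
  "bent n g \<longleftrightarrow> (\<forall>\<mu>. cmod (walsh n g \<mu>) = sqrt (2 ^ n))"

definition negabent :: "nat \<Rightarrow> (nat \<Rightarrow> 'a::{field,finite}) \<Rightarrow> ('a \<Rightarrow> 'a) \<Rightarrow> bool" where
  "negabent n \<alpha> g \<longleftrightarrow> (\<forall>\<mu>. cmod (nega_walsh n \<alpha> g \<mu>) = sqrt (2 ^ n))"

definition bent_negabent :: "nat \<Rightarrow> (nat \<Rightarrow> 'a::{field,finite}) \<Rightarrow> ('a \<Rightarrow> 'a) \<Rightarrow> bool" where
  "bent_negabent n \<alpha> g \<longleftrightarrow> bent n g \<and> negabent n \<alpha> g"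

definition Qfun :: "nat \<Rightarrow> 'a::field \<Rightarrow> 'a" where
  "Qfun n x = (\<Sum>i\<in>{1..<n div 2}. tr n (x ^ (2 ^ i + 1)))
              + tr (n div 2) (x ^ (2 ^ (n div 2) + 1))"

end

theory Submission
  imports Defs
begin

text \<open>Let $\omega(x) = 1$ if $Tr(x) = 0$ and $\omega(x) = \mathrm{i}$ otherwise. Both
  $x \mapsto \mathrm{i}^{wt(x)}$ and $x \mapsto (-1)^{Q(x)}\omega(x)$ satisfy
  $\varphi(x+y) = \varphi(x)\varphi(y)(-1)^{Tr(xy)}$: the first because the coordinates with respect
  to a self-dual basis are $x \mapsto Tr(x\alpha_i)$, the second because the polar form of $Q$ is
  $Tr(x)Tr(y) + Tr(xy)$. Their quotient is therefore an additive character $(-1)^{Tr(cx)}$. Writing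
  $\omega(x) = \frac{1+\mathrm{i}}{2} + \frac{1-\mathrm{i}}{2}(-1)^{Tr(x)}$ turns the nega-Walsh value of
  $f$ at $\mu$ into a combination of the Walsh values $a, b$ of $f + Q$ at $\mu + c$ and $\mu + c + 1$,
  of modulus $2^{n/2}$ iff $a^2 + b^2 = 2^{n+1}$; as $a, b$ are integers this forces $a^2 = b^2 = 2^n$.
  So $f$ is negabent iff $f + Q$ is bent, and since $Q + Q = 0$ both sides of the equivalence say that
  $f$ and $f + Q$ are bent.\<close>

lemma finite_field_power_card:
  fixes x :: "'a::{field,finite}"
  shows "x ^ card (UNIV :: 'a set) = x"
proof (cases "x = 0")
  case True
  then show ?thesis by (simp add: finite_UNIV_card_ge_0)
next
  case False
  let ?U = "UNIV - {0::'a}"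
  have "bij_betw ((*) x) ?U ?U"
    by (rule bij_betw_byWitness[where f' = "\<lambda>z. z / x"]) (use False in auto)
  then have "(\<Prod>y\<in>?U. x * y) = (\<Prod>y\<in>?U. y)"
    using prod.reindex_bij_betw[of "(*) x" ?U ?U id] by simp
  then have "x ^ card ?U = 1"
    by (simp add: prod.distrib)
  moreover have "card ?U + 1 = card (UNIV :: 'a set)"
    using finite_UNIV_card_ge_0[where 'a='a] by (simp add: card_Diff_singleton)
  ultimately show ?thesis
    by (metis power_Suc2 Suc_eq_plus1 mult_1)
qed

lemma square_eq_pow4_of_sum_squares:
  fixes a b :: int
  assumes "a^2 + b^2 = 2 * 4^k"
  shows "a^2 = 4^k"
  using assms
proof (induction k arbitrary: a b)
  case 0
  then have sum: "a^2 + b^2 = 2" by simp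
  then have "a^2 \<le> 2" "b^2 \<le> 2"
    using zero_le_power2[of a] zero_le_power2[of b] by linarith+
  then have "\<bar>a\<bar> < 2" "\<bar>b\<bar> < 2"
    by (auto intro: power2_less_imp_less)
  then have "a \<in> {-1, 0, 1}" "b \<in> {-1, 0, 1}" by auto
  then show ?case using sum by auto
next
  case (Suc k)
  have square_mod_4: "x^2 mod 4 = (if even x then 0 else 1)" for x :: int
  proof (cases "even x")
    case True
    then obtain p where "x^2 = 4 * p^2" by (auto elim!: evenE simp: power_mult_distrib)
    then show ?thesis using True by simp
  next
    case False
    then obtain p where "x = 2 * p + 1" by (rule oddE)
    then have "x^2 = 1 + (p^2 + p) * 4" by (simp add: power2_eq_square algebra_simps)
    then show ?thesis using False by (simp only: mod_mult_self1) simp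
  qed
  have "(a^2 + b^2) mod 4 = 0"
    using Suc.prems by simp
  then have "even a \<and> even b"
    by (subst (asm) mod_add_eq[symmetric]) (auto simp: square_mod_4 split: if_splits)
  then obtain p q where "a = 2 * p" "b = 2 * q" by (metis evenE)
  with Suc show ?case
    using Suc.IH[of p q] by (simp add: power_mult_distrib)
qed

lemma cmod_of_int_eq_sqrt_iff: "cmod (of_int a) = sqrt (2 ^ n) \<longleftrightarrow> a^2 = 2^n"
proof -
  have "cmod (of_int a) = sqrt (real_of_int (a^2))"
    by (simp add: real_sqrt_abs)
  moreover have "sqrt (real_of_int (a^2)) = sqrt (real_of_int (2^n)) \<longleftrightarrow> a^2 = 2^n"
    by (simp only: real_sqrt_eq_iff of_int_eq_iff)
  ultimately show ?thesis by simp
qed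

lemma cmod_combination_eq_sqrt_iff:
  "cmod ((1 + \<i>) / 2 * of_int a + (1 - \<i>) / 2 * of_int b) = sqrt (2 ^ n)
     \<longleftrightarrow> a^2 + b^2 = 2^(n+1)"
proof -
  have "(1 + \<i>) / 2 * of_int a + (1 - \<i>) / 2 * of_int b = Complex ((a + b) / 2) ((a - b) / 2)"
    by (simp add: complex_eq_iff)
  then have "cmod ((1 + \<i>) / 2 * of_int a + (1 - \<i>) / 2 * of_int b)
               = sqrt (real_of_int (a^2 + b^2) / 2)"
    by (simp add: cmod_def power2_eq_square field_simps)
  moreover have "real_of_int (a^2 + b^2) / 2 = 2^n \<longleftrightarrow> a^2 + b^2 = 2^(n+1)"
  proof -
    have "real_of_int (a^2 + b^2) / 2 = 2^n \<longleftrightarrow> real_of_int (a^2 + b^2) = real_of_int (2^(n+1))"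
      by (auto simp: field_simps)
    then show ?thesis by (simp only: of_int_eq_iff)
  qed
  ultimately show ?thesis by simp
qed

definition int_walsh :: "nat \<Rightarrow> ('a::{field,finite} \<Rightarrow> 'a) \<Rightarrow> 'a \<Rightarrow> int" where
  "int_walsh n g \<mu> = (\<Sum>x\<in>UNIV. if g x + tr n (\<mu> * x) = 0 then 1 else -1)"

lemma walsh_eq_of_int_walsh: "walsh n g \<mu> = of_int (int_walsh n g \<mu>)"
  unfolding walsh_def int_walsh_def sgn2_def of_int_sum by (intro sum.cong) simp_all

lemma bent_iff_int_walsh: "bent n g \<longleftrightarrow> (\<forall>\<mu>. (int_walsh n g \<mu>)^2 = 2^n)"
  unfolding bent_def walsh_eq_of_int_walsh cmod_of_int_eq_sqrt_iff ..

lemma idempotent_field_cases: "(t::'a::field) ^ 2 = t \<Longrightarrow> t \<in> {0, 1}"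
  by (auto simp: power2_eq_square)

lemma sgn2_nonzero [simp]: "sgn2 b \<noteq> 0"
  by (simp add: sgn2_def)

lemma tr_zero [simp]: "tr m (0::'a::field) = 0"
  by (simp add: tr_def power_0_left)

lemma tr_mult_bit: "(c::'a::field) \<in> {0, 1} \<Longrightarrow> tr m (c * x) = c * tr m x"
  by (auto simp: tr_def power_0_left)

lemma power_2_pow_Suc: "(x::'a::monoid_mult) ^ (2 ^ Suc k) = (x ^ (2 ^ k)) ^ 2"
  by (simp add: power_mult[symmetric] mult.commute)

lemma sum_split_add:
  "(\<Sum>k<(a::nat) + b. f k) = (\<Sum>k<a. f k) + (\<Sum>k<b. f (a + k) :: 'b::comm_monoid_add)"
  by (induction b) (simp_all add: add.assoc)

lemma all_add_const_iff: "(\<forall>x::'a::group_add. P (x + c)) \<longleftrightarrow> (\<forall>x. P x)"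
  by (metis diff_add_cancel)

locale gf2n =
  fixes n :: nat
  assumes card_UNIV: "card (UNIV :: 'a::{field,finite} set) = 2 ^ n"
begin

lemma power_2_pow_n [simp]: "(x::'a) ^ (2 ^ n) = x"
  using finite_field_power_card[of x] card_UNIV by simp

lemma power_2_pow_n_add: "(x::'a) ^ (2 ^ (n + k)) = x ^ (2 ^ k)"
  by (simp add: power_add power_mult)

lemma n_pos: "n \<ge> 1"
proof -
  have "card {0, 1::'a} \<le> 2 ^ n"
    unfolding card_UNIV[symmetric] by (rule card_mono) simp_all
  then show ?thesis by (cases n) simp_all
qed

lemma one_add_one_eq_zero: "(1::'a) + 1 = 0"
proof -
  have "(-1::'a) = (-1) ^ (2 ^ n)" by (rule power_2_pow_n[symmetric])
  also have "\<dots> = 1" using n_pos by (intro neg_one_even_power) simp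
  finally show ?thesis by (metis add.right_inverse)
qed

lemma add_self [simp]: "(x::'a) + x = 0"
  by (metis distrib_left mult.right_neutral mult_zero_right one_add_one_eq_zero)

lemma two_eq_zero [simp]: "(2::'a) = 0"
  by (metis one_add_one one_add_one_eq_zero)

lemma of_nat_eq_parity: "(of_nat k :: 'a) = (if even k then 0 else 1)"
  by (induction k) (auto simp: one_add_one_eq_zero)

lemma add_power_2_pow: "((x::'a) + y) ^ (2 ^ k) = x ^ (2 ^ k) + y ^ (2 ^ k)"
proof (induction k)
  case (Suc k)
  then show ?case by (simp only: power_2_pow_Suc) (simp add: power2_sum)
qed simp

lemma sum_power_2_pow: "(sum (f::_ \<Rightarrow> 'a) S) ^ (2 ^ k) = (\<Sum>i\<in>S. f i ^ (2 ^ k))"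
  by (induction S rule: infinite_finite_induct) (simp_all add: add_power_2_pow)

lemma tr_add: "tr m ((x::'a) + y) = tr m x + tr m y"
  by (simp add: tr_def add_power_2_pow sum.distrib)

lemma tr_sum: "tr m (sum (f::_ \<Rightarrow> 'a) S) = (\<Sum>i\<in>S. tr m (f i))"
  by (induction S rule: infinite_finite_induct) (simp_all add: tr_add)

lemma tr_power_2_pow: "tr m ((x::'a) ^ (2 ^ k)) = (tr m x) ^ (2 ^ k)"
  by (simp add: tr_def sum_power_2_pow power_mult[symmetric] mult.commute)

text \<open>Squaring permutes the summands of $Tr_1^m(z)$ cyclically once $z^{2^m} = z$.\<close>
lemma tr_in_bits:
  assumes "(z::'a) ^ (2 ^ m) = z"
  shows "tr m z \<in> {0, 1}"
proof (rule idempotent_field_cases)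
  have "(tr m z) ^ 2 = (\<Sum>k<m. z ^ (2 ^ Suc k))"
    using tr_power_2_pow[of m z 1] by (simp add: tr_def power_mult[symmetric] mult.commute)
  also have "\<dots> = tr m z"
    using sum.lessThan_Suc_shift[of "\<lambda>k. z ^ (2 ^ k)" m] assms by (simp add: tr_def)
  finally show "(tr m z) ^ 2 = tr m z" .
qed

lemma tr_n_in_bits [simp]: "tr n (x::'a) \<in> {0, 1}"
  by (rule tr_in_bits) simp

lemma tr_n_power_2_pow: "tr n ((x::'a) ^ (2 ^ k)) = tr n x"
  using tr_n_in_bits[of x] by (auto simp: tr_power_2_pow power_0_left)

lemma bits_add [simp]: "(a::'a) \<in> {0, 1} \<Longrightarrow> b \<in> {0, 1} \<Longrightarrow> a + b \<in> {0, 1}"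
  using one_add_one by auto

lemma bits_mult [simp]: "(a::'a) \<in> {0, 1} \<Longrightarrow> b \<in> {0, 1} \<Longrightarrow> a * b \<in> {0, 1}"
  by auto

lemma bits_sum: "(\<And>i. i \<in> S \<Longrightarrow> f i \<in> {0, 1}) \<Longrightarrow> sum (f::_ \<Rightarrow> 'a) S \<in> {0, 1}"
proof (induction S rule: infinite_finite_induct)
  case (insert x F)
  then show ?case using bits_add[of "f x" "sum f F"] by simp
qed simp_all

lemma sgn2_add: "(a::'a) \<in> {0, 1} \<Longrightarrow> b \<in> {0, 1} \<Longrightarrow> sgn2 (a + b) = sgn2 a * sgn2 b"
  by (auto simp: sgn2_def one_add_one_eq_zero)

lemma sgn2_of_nat: "sgn2 (of_nat k :: 'a) = (-1) ^ k"
  by (simp add: sgn2_def of_nat_eq_parity)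

end

lemma card_symdiff:
  assumes "finite X" and "finite Y"
  shows "card ((X - Y) \<union> (Y - X)) + 2 * card (X \<inter> Y) = card X + card Y"
proof -
  have "card ((X - Y) \<union> (Y - X)) = card (X - Y) + card (Y - X)"
    using assms by (intro card_Un_disjoint) auto
  moreover have "card (X - Y) + card (X \<inter> Y) = card X"
    using assms card_Diff_subset_Int[of X Y] card_mono[of X "X \<inter> Y"] by (simp add: Int_commute)
  moreover have "card (Y - X) + card (X \<inter> Y) = card Y"
    using assms card_Diff_subset_Int[of Y X] card_mono[of Y "X \<inter> Y"] by (simp add: Int_commute)
  ultimately show ?thesis by simp
qed

locale gf2n_self_dual = gf2n n
  for n :: nat +
  fixes \<alpha> :: "nat \<Rightarrow> 'a::{field,finite}"
  assumes self_dual: "self_dual_basis n \<alpha>"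
begin

definition basis_sum :: "nat set \<Rightarrow> 'a" where
  "basis_sum S = (\<Sum>i\<in>S. \<alpha> i)"

definition coord_set :: "'a \<Rightarrow> nat set" where
  "coord_set x = {j. j < n \<and> tr n (x * \<alpha> j) = 1}"

lemma tr_basis_sum_mult:
  assumes "S \<subseteq> {..<n}" and "j < n"
  shows "tr n (basis_sum S * \<alpha> j) = (if j \<in> S then 1 else 0)"
proof -
  have "tr n (basis_sum S * \<alpha> j) = (\<Sum>i\<in>S. tr n (\<alpha> i * \<alpha> j))"
    by (simp add: basis_sum_def sum_distrib_right tr_sum)
  also have "\<dots> = (\<Sum>i\<in>S. if i = j then 1 else 0)"
    using assms self_dual by (intro sum.cong) (auto simp: self_dual_basis_def)
  also have "\<dots> = (if j \<in> S then 1 else 0)"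
    using finite_subset[OF assms(1)] by simp
  finally show ?thesis .
qed

lemma coord_set_basis_sum: "S \<subseteq> {..<n} \<Longrightarrow> coord_set (basis_sum S) = S"
  by (auto simp: coord_set_def tr_basis_sum_mult subset_iff split: if_splits)

lemma coord_set_subset: "coord_set x \<subseteq> {..<n}"
  by (auto simp: coord_set_def)

lemma finite_coord_set [simp]: "finite (coord_set x)"
  using coord_set_subset finite_subset by blast

text \<open>The $2^n$ sums of basis elements are distinct, hence exhaust the field.\<close>
lemma basis_sum_coord_set [simp]: "basis_sum (coord_set x) = x"
proof -
  have "inj_on basis_sum (Pow {..<n})"
    by (rule inj_on_inverseI[where g = coord_set]) (simp add: coord_set_basis_sum)
  then have "card (basis_sum ` Pow {..<n}) = card (UNIV :: 'a set)"
    by (simp add: card_image card_Pow card_UNIV)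
  then have "basis_sum ` Pow {..<n} = UNIV"
    by (metis card_subset_eq finite_class.finite_UNIV subset_UNIV)
  then obtain S where "S \<subseteq> {..<n}" "x = basis_sum S"
    by (metis PowD UNIV_I imageE)
  then show ?thesis by (simp add: coord_set_basis_sum)
qed

lemma coords_eq_coord_set: "coords n \<alpha> x = (\<lambda>i. i \<in> coord_set x)"
  unfolding coords_def
proof (rule the_equality)
  have "(\<Sum>i<n. if i \<in> coord_set x then \<alpha> i else 0) = basis_sum (coord_set x)"
    using coord_set_subset by (simp add: sum.If_cases basis_sum_def Int_absorb1)
  then show "(\<forall>i. n \<le> i \<longrightarrow> i \<notin> coord_set x)
      \<and> x = (\<Sum>i<n. if i \<in> coord_set x then \<alpha> i else 0)"
    using coord_set_subset by force
next
  fix c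
  assume c: "(\<forall>i. n \<le> i \<longrightarrow> \<not> c i) \<and> x = (\<Sum>i<n. if c i then \<alpha> i else 0)"
  then have "x = basis_sum {i. i < n \<and> c i}"
    by (simp add: sum.If_cases basis_sum_def Int_def)
  then have "coord_set x = {i. i < n \<and> c i}"
    by (simp add: coord_set_basis_sum subset_eq)
  then show "c = (\<lambda>i. i \<in> coord_set x)"
    using c by (auto simp: not_le[symmetric])
qed

lemma wt_eq_card: "wt n \<alpha> x = card (coord_set x)"
  by (simp add: wt_def coords_eq_coord_set coord_set_def)

lemma coord_set_add: "coord_set (x + y) = (coord_set x - coord_set y) \<union> (coord_set y - coord_set x)"
  using tr_n_in_bits one_add_one_eq_zero
  by (auto simp: coord_set_def distrib_right tr_add) (metis add.right_neutral add_self)+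

lemma tr_mult_eq_card: "tr n (x * y) = of_nat (card (coord_set x \<inter> coord_set y))"
proof -
  have "tr n (x * y) = (\<Sum>i\<in>coord_set x. tr n (\<alpha> i * y))"
    by (subst (1) basis_sum_coord_set[symmetric, of x])
      (simp add: basis_sum_def sum_distrib_right tr_sum)
  also have "\<dots> = (\<Sum>i\<in>coord_set x. if i \<in> coord_set y then 1 else 0)"
    using coord_set_subset tr_n_in_bits
    by (intro sum.cong) (auto simp: coord_set_def mult.commute)
  also have "\<dots> = of_nat (card (coord_set x \<inter> coord_set y))"
    by (simp add: sum.If_cases Int_def)
  finally show ?thesis .
qed

lemma i_pow_wt_add:
  "\<i> ^ wt n \<alpha> (x + y) = \<i> ^ wt n \<alpha> x * \<i> ^ wt n \<alpha> y * sgn2 (tr n (x * y))"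
proof -
  let ?X = "coord_set x" and ?Y = "coord_set y"
  have "card (coord_set (x + y)) + 2 * card (?X \<inter> ?Y) = card ?X + card ?Y"
    unfolding coord_set_add by (rule card_symdiff) simp_all
  then have "\<i> ^ card ?X * \<i> ^ card ?Y = \<i> ^ card (coord_set (x + y)) * (-1) ^ card (?X \<inter> ?Y)"
    by (metis power_add power_mult power2_i)
  then show ?thesis
    by (simp add: wt_eq_card tr_mult_eq_card sgn2_of_nat field_simps power_add[symmetric]
        flip: power2_eq_square power_mult)
qed

lemma additive_character_eq_sgn2_tr:
  fixes \<chi> :: "'a \<Rightarrow> complex"
  assumes mult: "\<And>x y. \<chi> (x + y) = \<chi> x * \<chi> y" and nonzero: "\<And>x. \<chi> x \<noteq> 0"
  obtains c where "\<And>x. \<chi> x = sgn2 (tr n (c * x))"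
proof -
  define \<Lambda> where "\<Lambda> = {i. i < n \<and> \<chi> (\<alpha> i) = -1}"
  have "\<chi> 0 = 1" using mult[of 0 0] nonzero[of 0] by simp
  then have sign: "\<chi> x = 1 \<or> \<chi> x = -1" for x
    using mult[of x x] by (simp flip: power2_eq_square add: power2_eq_1_iff)
  have basis_prod: "\<chi> (basis_sum S) = (\<Prod>i\<in>S. \<chi> (\<alpha> i))" if "finite S" for S
    using that \<open>\<chi> 0 = 1\<close> by (induction S rule: finite_induct) (simp_all add: basis_sum_def mult)
  have coord_set_\<Lambda>: "coord_set (basis_sum \<Lambda>) = \<Lambda>"
    by (rule coord_set_basis_sum) (auto simp: \<Lambda>_def)
  have "\<chi> x = sgn2 (tr n (basis_sum \<Lambda> * x))" for x
  proof -
    have "\<chi> x = (\<Prod>i\<in>coord_set x. \<chi> (\<alpha> i))"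
      using basis_prod[of "coord_set x"] by simp
    also have "\<dots> = (\<Prod>i\<in>coord_set x. if i \<in> \<Lambda> then -1 else 1)"
      using sign by (intro prod.cong) (auto simp: \<Lambda>_def coord_set_def)
    also have "\<dots> = (-1) ^ card (coord_set x \<inter> \<Lambda>)"
      by (simp add: prod.If_cases Int_def)
    also have "\<dots> = sgn2 (tr n (basis_sum \<Lambda> * x))"
      by (simp add: tr_mult_eq_card sgn2_of_nat coord_set_\<Lambda> Int_commute)
    finally show ?thesis .
  qed
  then show thesis by (rule that)
qed

end

locale gf2n_even = gf2n +
  assumes even_n: "even n"
begin

lemma n_eq_half_add_half: "n = n div 2 + n div 2"
  using even_n by auto

lemma half_pos: "n div 2 \<ge> 1"
  using n_pos even_n by (auto elim!: evenE)

lemma add_power_2_pow_add_one: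
  "((x::'a) + y) ^ (2 ^ i + 1)
     = x ^ (2 ^ i + 1) + y ^ (2 ^ i + 1) + (x ^ (2 ^ i) * y + x * y ^ (2 ^ i))"
  by (simp add: power_add add_power_2_pow algebra_simps)

lemma tr_power_2_pow_mult:
  assumes "i \<le> n"
  shows "tr n ((x::'a) ^ (2 ^ i) * y) = tr n (x * y ^ (2 ^ (n - i)))"
proof -
  have "tr n (x ^ (2 ^ i) * y) = tr n ((x ^ (2 ^ i) * y) ^ (2 ^ (n - i)))"
    by (rule tr_n_power_2_pow[symmetric])
  also have "(x ^ (2 ^ i) * y) ^ (2 ^ (n - i)) = x ^ (2 ^ (i + (n - i))) * y ^ (2 ^ (n - i))"
    by (simp add: power_mult_distrib power_mult[symmetric] power_add)
  finally show ?thesis using assms by simp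
qed

lemma tr_half_power_half_add_one: "tr (n div 2) ((x::'a) ^ (2 ^ (n div 2) + 1)) \<in> {0, 1}"
proof (rule tr_in_bits)
  have "(x ^ (2 ^ (n div 2) + 1)) ^ (2 ^ (n div 2)) = x ^ (2 ^ n) * x ^ (2 ^ (n div 2))"
    by (subst (2) n_eq_half_add_half)
      (simp add: power_mult[symmetric] power_add algebra_simps)
  then show "(x ^ (2 ^ (n div 2) + 1)) ^ (2 ^ (n div 2)) = x ^ (2 ^ (n div 2) + 1)"
    by (simp add: power_add)
qed

lemma Qfun_in_bits [simp]: "Qfun n (x::'a) \<in> {0, 1}"
  unfolding Qfun_def by (intro bits_add bits_sum tr_n_in_bits tr_half_power_half_add_one)

text \<open>For $n = 2m$, $(x^{2^m} y)^{2^k} = (x y^{2^m})^{2^{m+k}}$: the half trace of $x^{2^m} y$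
  supplies the missing half of $Tr_1^n(x y^{2^m})$.\<close>
lemma tr_half_cross_term:
  "tr (n div 2) ((x::'a) ^ (2 ^ (n div 2)) * y + x * y ^ (2 ^ (n div 2)))
     = tr n (x * y ^ (2 ^ (n div 2)))"
proof -
  define m where "m = n div 2"
  define w where "w = x * y ^ (2 ^ m)"
  have "(x ^ (2 ^ m) * y) ^ (2 ^ k) = w ^ (2 ^ (m + k))" for k
  proof -
    have "y ^ (2 ^ (m + (m + k))) = y ^ (2 ^ k)"
      using power_2_pow_n_add[of y k] n_eq_half_add_half by (simp add: m_def add.assoc[symmetric])
    then show ?thesis
      by (simp add: w_def power_mult_distrib power_mult[symmetric] power_add mult.commute)
  qed
  then have "tr m (x ^ (2 ^ m) * y) = (\<Sum>k<m. w ^ (2 ^ (m + k)))"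
    by (simp add: tr_def)
  moreover have "tr n w = tr m w + (\<Sum>k<m. w ^ (2 ^ (m + k)))"
    unfolding tr_def m_def by (subst n_eq_half_add_half) (simp add: sum_split_add)
  ultimately show ?thesis
    by (simp add: tr_add w_def m_def add.commute)
qed

lemma sum_tr_mult_conjugates:
  "(\<Sum>j\<in>{1..<n}. tr n ((x::'a) * y ^ (2 ^ j))) = tr n x * tr n y + tr n (x * y)"
proof -
  have "tr n y = y + (\<Sum>j\<in>{1..<n}. y ^ (2 ^ j))"
    using n_pos sum.atLeast_Suc_lessThan[of 0 n "\<lambda>j. y ^ (2 ^ j)"]
    by (simp add: tr_def atLeast0LessThan)
  then have conjugates: "(\<Sum>j\<in>{1..<n}. y ^ (2 ^ j)) = tr n y + y"
    by (metis add.left_commute add_self add.right_neutral)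
  have "(\<Sum>j\<in>{1..<n}. tr n (x * y ^ (2 ^ j))) = tr n (x * (tr n y + y))"
    by (simp add: tr_sum sum_distrib_left flip: conjugates)
  also have "\<dots> = tr n x * tr n y + tr n (x * y)"
    using tr_mult_bit[OF tr_n_in_bits[of y], of n x]
    by (simp add: distrib_left tr_add mult.commute)
  finally show ?thesis .
qed

lemma Qfun_add:
  "Qfun n ((x::'a) + y) = Qfun n x + Qfun n y + tr n x * tr n y + tr n (x * y)"
proof -
  define m where "m = n div 2"
  define c where "c j = tr n (x * y ^ (2 ^ j))" for j
  define S where "S z = (\<Sum>i\<in>{1..<m}. tr n (z ^ (2 ^ i + 1)))" for z :: 'a
  define H where "H z = tr m (z ^ (2 ^ m + 1))" for z :: 'a
  have "(\<Sum>i\<in>{1..<m}. tr n (x ^ (2 ^ i) * y)) = (\<Sum>i\<in>{1..<m}. c (n - i))"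
    using n_eq_half_add_half by (intro sum.cong) (auto simp: c_def m_def tr_power_2_pow_mult)
  also have "\<dots> = (\<Sum>j\<in>{m+1..<n}. c j)"
    by (rule sum.reindex_bij_witness[where i = "\<lambda>j. n - j" and j = "\<lambda>i. n - i"])
      (use n_eq_half_add_half in \<open>auto simp: m_def\<close>)
  finally have "S (x + y) = S x + S y + (\<Sum>j\<in>{1..<m}. c j) + (\<Sum>j\<in>{m+1..<n}. c j)"
    unfolding S_def add_power_2_pow_add_one by (simp add: tr_add sum.distrib c_def)
  moreover have "H (x + y) = H x + H y + c m"
    using tr_half_cross_term[of x y] unfolding H_def add_power_2_pow_add_one
    by (simp add: tr_add c_def m_def)
  moreover have "(\<Sum>j\<in>{1..<m}. c j) + c m + (\<Sum>j\<in>{m+1..<n}. c j)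
          = (\<Sum>j\<in>{1..<m}. c j) + (\<Sum>j\<in>{m..<n}. c j)"
    using half_pos n_eq_half_add_half by (subst (2) sum.atLeast_Suc_lessThan) (auto simp: m_def)
  moreover have "\<dots> = (\<Sum>j\<in>{1..<n}. c j)"
    using half_pos n_eq_half_add_half by (intro sum.atLeastLessThan_concat) (auto simp: m_def)
  moreover have "\<dots> = tr n x * tr n y + tr n (x * y)"
    unfolding c_def by (rule sum_tr_mult_conjugates)
  moreover have "Qfun n z = S z + H z" for z
    by (simp add: Qfun_def S_def H_def m_def)
  ultimately show ?thesis
    by (simp add: algebra_simps)
qed

end

locale gf2n_even_self_dual = gf2n_self_dual n \<alpha> + gf2n_even n
  for n :: nat and \<alpha> :: "nat \<Rightarrow> 'a::{field,finite}"
begin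

definition omega :: "'a \<Rightarrow> complex" where
  "omega x = (if tr n x = 0 then 1 else \<i>)"

lemma omega_eq_combination: "omega x = (1 + \<i>) / 2 + (1 - \<i>) / 2 * sgn2 (tr n x)"
  using tr_n_in_bits[of x] by (auto simp: omega_def sgn2_def field_simps)

lemma omega_nonzero [simp]: "omega x \<noteq> 0"
  by (simp add: omega_def)

lemma sgn2_Qfun_omega_add:
  "sgn2 (Qfun n (x + y)) * omega (x + y)
     = sgn2 (Qfun n x) * omega x * (sgn2 (Qfun n y) * omega y) * sgn2 (tr n (x * y))"
proof -
  have "omega (x + y) = omega x * omega y * sgn2 (tr n x * tr n y)"
    using tr_n_in_bits[of x] tr_n_in_bits[of y] one_add_one_eq_zero
    by (auto simp: omega_def tr_add sgn2_def)
  moreover have "sgn2 (Qfun n (x + y))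
      = sgn2 (Qfun n x) * sgn2 (Qfun n y) * sgn2 (tr n x * tr n y) * sgn2 (tr n (x * y))"
    unfolding Qfun_add by (simp only: sgn2_add bits_add bits_mult Qfun_in_bits tr_n_in_bits)
  moreover have "sgn2 (tr n x * tr n y) * sgn2 (tr n x * tr n y) = 1"
    by (simp add: sgn2_def)
  ultimately show ?thesis
    by (simp add: mult_ac)
qed

lemma i_pow_wt_decomposition:
  obtains c where "\<And>x. \<i> ^ wt n \<alpha> x = sgn2 (tr n (c * x)) * sgn2 (Qfun n x) * omega x"
proof -
  define \<chi> where "\<chi> x = \<i> ^ wt n \<alpha> x / (sgn2 (Qfun n x) * omega x)" for x
  have "\<chi> (x + y) = \<chi> x * \<chi> y" for x y
    by (simp add: \<chi>_def i_pow_wt_add sgn2_Qfun_omega_add)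
  moreover have "\<chi> x \<noteq> 0" for x
    by (simp add: \<chi>_def)
  ultimately obtain c where "\<And>x. \<chi> x = sgn2 (tr n (c * x))"
    using additive_character_eq_sgn2_tr by blast
  then show thesis
    by (intro that) (simp add: \<chi>_def field_simps)
qed

lemma nega_walsh_eq_walsh_add_Qfun:
  assumes c: "\<And>x. \<i> ^ wt n \<alpha> x = sgn2 (tr n (c * x)) * sgn2 (Qfun n x) * omega x"
    and h: "\<And>x. h x \<in> {0, 1}"
  shows "nega_walsh n \<alpha> h \<mu>
      = (1 + \<i>) / 2 * walsh n (\<lambda>x. h x + Qfun n x) (\<mu> + c)
        + (1 - \<i>) / 2 * walsh n (\<lambda>x. h x + Qfun n x) (\<mu> + c + 1)"
proof -
  have "sgn2 (h x + tr n (\<mu> * x)) * \<i> ^ wt n \<alpha> x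
      = (1 + \<i>) / 2 * sgn2 (h x + Qfun n x + tr n ((\<mu> + c) * x))
        + (1 - \<i>) / 2 * sgn2 (h x + Qfun n x + tr n ((\<mu> + c + 1) * x))" for x
  proof -
    let ?s = "sgn2 (h x + tr n (\<mu> * x))" and ?a = "sgn2 (tr n (c * x))"
      and ?q = "sgn2 (Qfun n x)" and ?t = "sgn2 (tr n x)"
    have "h x + Qfun n x + tr n ((\<mu> + c) * x) = h x + tr n (\<mu> * x) + tr n (c * x) + Qfun n x"
      and "h x + Qfun n x + tr n ((\<mu> + c + 1) * x)
             = h x + tr n (\<mu> * x) + tr n (c * x) + Qfun n x + tr n x"
      by (simp_all add: distrib_right tr_add algebra_simps)
    then have "sgn2 (h x + Qfun n x + tr n ((\<mu> + c) * x)) = ?s * ?a * ?q"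
      and "sgn2 (h x + Qfun n x + tr n ((\<mu> + c + 1) * x)) = ?s * ?a * ?q * ?t"
      using h[of x] by (simp_all only: sgn2_add bits_add Qfun_in_bits tr_n_in_bits)
    then show ?thesis
      by (simp add: c omega_eq_combination algebra_simps)
  qed
  then show ?thesis
    by (simp add: nega_walsh_def walsh_def sum.distrib sum_distrib_left)
qed

lemma negabent_iff_bent_add_Qfun:
  assumes "\<And>x. h x \<in> {0, 1}"
  shows "negabent n \<alpha> h \<longleftrightarrow> bent n (\<lambda>x. h x + Qfun n x)"
proof -
  let ?g = "\<lambda>x. h x + Qfun n x"
  obtain c where "\<And>x. \<i> ^ wt n \<alpha> x = sgn2 (tr n (c * x)) * sgn2 (Qfun n x) * omega x"
    using i_pow_wt_decomposition by blast
  note nega = nega_walsh_eq_walsh_add_Qfun[OF this assms]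
  have "(4::int) ^ (n div 2) = 2 ^ (2 * (n div 2))"
    by (simp add: power_mult)
  then have pow4: "(2::int) ^ n = 4 ^ (n div 2)"
    using even_n by simp
  have "negabent n \<alpha> h
      \<longleftrightarrow> (\<forall>\<mu>. (int_walsh n ?g (\<mu> + c))^2 + (int_walsh n ?g (\<mu> + c + 1))^2 = 2^(n+1))"
    unfolding negabent_def nega walsh_eq_of_int_walsh cmod_combination_eq_sqrt_iff ..
  also have "\<dots> \<longleftrightarrow> (\<forall>\<nu>. (int_walsh n ?g \<nu>)^2 + (int_walsh n ?g (\<nu> + 1))^2 = 2^(n+1))"
    by (rule all_add_const_iff)
  also have "\<dots> \<longleftrightarrow> (\<forall>\<nu>. (int_walsh n ?g \<nu>)^2 = 2^n)"
  proof
    assume "\<forall>\<nu>. (int_walsh n ?g \<nu>)^2 + (int_walsh n ?g (\<nu> + 1))^2 = 2^(n+1)"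
    then show "\<forall>\<nu>. (int_walsh n ?g \<nu>)^2 = 2^n"
      using square_eq_pow4_of_sum_squares by (simp add: pow4) blast
  qed simp
  finally show ?thesis by (simp add: bent_iff_int_walsh)
qed

end

theorem corollary2:
  fixes n :: nat and \<alpha> :: "nat \<Rightarrow> 'a::{field,finite}" and f :: "'a \<Rightarrow> 'a"
  assumes "n \<ge> 2" and "even n"
    and "card (UNIV :: 'a set) = 2 ^ n"
    and "self_dual_basis n \<alpha>"
    and "\<forall>x. f x \<in> {0, 1}"
  shows "bent_negabent n \<alpha> f \<longleftrightarrow> bent_negabent n \<alpha> (\<lambda>x. f x + Qfun n x)"
proof -
  interpret gf2n_even_self_dual n \<alpha>
    using assms(2-4) by unfold_locales
  have f_bits: "\<And>x. f x \<in> {0, 1}" and f_Q_bits: "\<And>x. f x + Qfun n x \<in> {0, 1}"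
    using assms(5) by (intro bits_add Qfun_in_bits | blast)+
  have "(\<lambda>x. f x + Qfun n x + Qfun n x) = f"
    by (simp add: add.assoc)
  then show ?thesis
    unfolding bent_negabent_def negabent_iff_bent_add_Qfun[OF f_bits]
      negabent_iff_bent_add_Qfun[OF f_Q_bits]
    by auto
qed

end
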